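(* Let $0<a_1<a_2<\cdots<a_n$ be task lengths, $A_i:=a_1+\cdots+a_i$, and for a permutation $\pi$ of $\{1,\dots,n\}$, $A_{\pi(i)}:=a_{\pi(1)}+\cdots+a_{\pi(i)}$. Let $\lambda(t)\ge0$ be the intensity of the disruption process and $p(t):=\lambda(t)e^{-\int_0^t\lambda(u)\,du}$. In the single-failure model, for every permutation $\pi$, $$R_{1:n}(0)-R_{\pi(1):\pi(n)}(0)=\sum_{i=1}^n\left(a_i\int_0^{A_i}p(s)\,ds-a_{\pi(i)}\int_0^{A_{\pi(i)}}p(s)\,ds\right).$$ Moreover: (i) if $p$ is strictly decreasing on $[0,A_n]$, then SPT is optimal, i.e. $R_{1:n}(0)<R_{\pi(1):\pi(n)}(0)$ for every $\pi\neq\mathrm{id}$; (ii) if $p$ is strictly increasing on $[0,A_n]$, then LPT is optimal, i.e. $R_{n:1}(0)<R_{\pi(1):\pi(n)}(0)$ for every $\pi$ with $(\pi(1),\dots,\pi(n))\ne(n,n-1,\dots,1)$.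
   Context: Single-failure model: a single machine processes tasks of lengths $a_{\pi(1)},\dots,a_{\pi(n)}$ in this order starting at time $0$; a task of length $c$ needs $c$ units of uninterrupted processing. At most one disruption occurs: its time $D$ is the first point of a non-homogeneous Poisson process with intensity $\lambda$ (so $D$ has density $p$ on $[0,\infty)$, and possibly $D=\infty$). If $D\ge A_{\pi(n)}$ the batch finishes at time $T=A_{\pi(n)}$; if $A_{\pi(i-1)}\le D<A_{\pi(i)}$ (with $A_{\pi(0)}=0$), the task $a_{\pi(i)}$ in progress is restarted from scratch at time $D$ and it and all remaining tasks are then processed without further disruption, so $T=D+a_{\pi(i)}+\cdots+a_{\pi(n)}$. $R_{\pi(1):\pi(n)}(0):=\mathbb E[T]$; $R_{1:n}$ is the identity order (SPT, increasing lengths) and $R_{n:1}$ the order $a_n,\dots,a_1$ (LPT, decreasing lengths). *)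

theory Defs
  imports "HOL-Analysis.Analysis"
begin

text \<open>Density of the first point D of a non-homogeneous Poisson process with
  intensity lam: p(t) = lam(t) * exp(- int_0^t lam).\<close>
definition pdens :: "(real \<Rightarrow> real) \<Rightarrow> real \<Rightarrow> real" where
  "pdens lam t = lam t * exp (- integral {0..t} lam)"

definition Apre :: "(nat \<Rightarrow> real) \<Rightarrow> (nat \<Rightarrow> nat) \<Rightarrow> nat \<Rightarrow> real" where
  "Apre a \<pi> i = (\<Sum>j=1..i. a (\<pi> j))"

text \<open>Completion time T of the batch (order pi, n tasks) when the disruption
  occurs at time s (finite, s >= 0). If A_{pi(i-1)} <= s < A_{pi(i)} the task in
  progress restarts at s: T = s + a_{pi(i)} + ... + a_{pi(n)}; if s >= A_{pi(n)},
  T = A_{pi(n)}.\<close>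
definition Tcompl :: "(nat \<Rightarrow> real) \<Rightarrow> (nat \<Rightarrow> nat) \<Rightarrow> nat \<Rightarrow> real \<Rightarrow> real" where
  "Tcompl a \<pi> n s =
     (\<Sum>i=1..n. (if Apre a \<pi> (i - 1) \<le> s \<and> s < Apre a \<pi> i
                 then s + (\<Sum>j=i..n. a (\<pi> j)) else 0))
     + (if Apre a \<pi> n \<le> s then Apre a \<pi> n else 0)"

text \<open>Expected completion time R_{pi(1):pi(n)}(0) = E[T]: D has density p on
  [0,infinity) and the remaining mass 1 - int_0^infinity p sits at D = infinity,
  where T = A_{pi(n)}.\<close>
definition Rexp :: "(nat \<Rightarrow> real) \<Rightarrow> (nat \<Rightarrow> nat) \<Rightarrow> nat \<Rightarrow> (real \<Rightarrow> real) \<Rightarrow> real" where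
  "Rexp a \<pi> n p =
     integral {0..} (\<lambda>s. Tcompl a \<pi> n s * p s)
     + Apre a \<pi> n * (1 - integral {0..} p)"

definition lpt :: "nat \<Rightarrow> nat \<Rightarrow> nat" where
  "lpt n i = (if i \<in> {1..n} then n + 1 - i else i)"

end

(*
  Cutting the expectation at the prefix sums shows that, for a disruption at time s >= 0, the
  completion time is  min s A_n + (sum of a_pi(j) over the j with s < A_pi(j)):  every task not
  finished before the disruption is processed in full after it.  Integrating against p gives
  R_pi(0) = C + sum_i a_pi(i) F(A_pi(i)) with F(x) = int_0^x p and C independent of pi, whence
  the difference formula.  Interchanging adjacent tasks of lengths x, y started at time t changes
  the sum by  x int_{t+x}^{t+x+y} p - y int_{t+y}^{t+x+y} p,  i.e. xy times the difference of the
  averages of p over the final stretches of lengths y and x of [t, t+x+y].  For strictly decreasing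
  p this is negative when y < x, for strictly increasing p when x < y.  So every order other than
  SPT (resp. LPT) can be strictly improved by an adjacent interchange, and as there are finitely
  many orders the sorted one is the unique minimiser.
*)
theory Submission
  imports Defs
begin

lemma integral_Icc_diff:
  fixes f :: "real \<Rightarrow> real"
  assumes "f integrable_on {a..c}" "a \<le> b" "b \<le> c"
  shows "integral {a..c} f - integral {a..b} f = integral {b..c} f"
  using Henstock_Kurzweil_Integration.integral_combine[OF assms(2,3,1)] by simp

lemma integrable_continuous_mult_nonneg:
  fixes f g :: "real \<Rightarrow> real"
  assumes f: "f integrable_on {u..v}" and f_nonneg: "\<And>s. s \<in> {u..v} \<Longrightarrow> 0 \<le> f s"
    and g: "continuous_on {u..v} g"
  shows "(\<lambda>s. g s * f s) integrable_on {u..v}"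
proof -
  have "g \<in> borel_measurable (lebesgue_on {u..v})"
    by (rule continuous_imp_measurable_on_sets_lebesgue[OF g]) auto
  moreover have "bounded (g ` {u..v})"
    by (rule compact_imp_bounded[OF compact_continuous_image[OF g]]) auto
  moreover have "f absolutely_integrable_on {u..v}"
    using nonnegative_absolutely_integrable_1[OF f f_nonneg] .
  ultimately have "(\<lambda>s. g s * f s) absolutely_integrable_on {u..v}"
    by (intro absolutely_integrable_bounded_measurable_product_real) auto
  then show ?thesis
    using absolutely_integrable_on_def by blast
qed

lemma has_integral_restrict_less:
  fixes f :: "real \<Rightarrow> real"
  assumes "0 \<le> v" "f integrable_on {0..v}"
  shows "((\<lambda>s. if s < v then f s else 0) has_integral integral {0..v} f) {0..}"
proof -
  have "((\<lambda>s. if s \<in> {0..v} then f s else 0) has_integral integral {0..v} f) {0..}"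
    using assms by (subst has_integral_restrict) auto
  then show ?thesis
    by (rule has_integral_spike[OF negligible_sing[of v], rotated]) auto
qed

lemma integrable_on_atLeast_if_integrals_bounded:
  fixes f :: "real \<Rightarrow> real"
  assumes int: "\<And>b. a \<le> b \<Longrightarrow> f integrable_on {a..b}"
    and nonneg: "\<And>x. a \<le> x \<Longrightarrow> 0 \<le> f x"
    and bound: "\<And>b. a \<le> b \<Longrightarrow> integral {a..b} f \<le> B"
  shows "f integrable_on {a..}"
proof -
  define g where "g k x = (if x \<in> {a..a + real k} then f x else 0)" for k x
  have g: "(g k has_integral integral {a..a + real k} f) {a..}" for k
    unfolding g_def using int[of "a + real k"] by (subst has_integral_restrict) auto
  have "f integrable_on {a..} \<and> (\<lambda>k. integral {a..} (g k)) \<longlonglongrightarrow> integral {a..} f"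
  proof (rule monotone_convergence_increasing)
    show "g k integrable_on {a..}" for k
      using g by blast
    show "g k x \<le> g (Suc k) x" if "x \<in> {a..}" for k x
      using that nonneg by (auto simp: g_def)
    show "(\<lambda>k. g k x) \<longlonglongrightarrow> f x" if "x \<in> {a..}" for x
    proof -
      obtain N :: nat where "x - a \<le> real N"
        using real_arch_simple by blast
      then have "\<forall>k\<ge>N. g k x = f x"
        using that by (auto simp: g_def)
      then show ?thesis
        by (intro tendsto_eventually) (auto simp: eventually_sequentially)
    qed
    have "\<bar>integral {a..} (g k)\<bar> \<le> B" for k
      using g[of k] bound[of "a + real k"] integral_nonneg[OF int[of "a + real k"] nonneg]
      by (auto simp: integral_unique)
    then show "bounded (range (\<lambda>k. integral {a..} (g k)))"
      unfolding bounded_iff by auto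
  qed
  then show ?thesis
    by blast
qed

lemma integral_gt_if_strict_antimono:
  fixes f :: "real \<Rightarrow> real"
  assumes "u < v" "f integrable_on {u..v}" "strict_antimono_on {u..v} f"
  shows "(v - u) * f v < integral {u..v} f"
proof -
  define m where "m = (u + v) / 2"
  have m: "u < m" "m < v"
    using assms(1) by (auto simp: m_def)
  have dec: "f y < f x" if "u \<le> x" "x < y" "y \<le> v" for x y
    using assms(3) that by (auto simp: monotone_on_def)
  have int: "f integrable_on {c..d}" if "u \<le> c" "d \<le> v" for c d
    using integrable_subinterval_real[OF assms(2)] that by (cases "c \<le> d") auto
  have "(m - u) * f m \<le> integral {u..m} f"
    using integral_le[where f="\<lambda>_. f m" and S="{u..m}" and g=f] int[of u m] m dec
    by (force simp: less_eq_real_def)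
  moreover have "(v - m) * f v \<le> integral {m..v} f"
    using integral_le[where f="\<lambda>_. f v" and S="{m..v}" and g=f] int[of m v] m dec
    by (force simp: less_eq_real_def)
  moreover have "(m - u) * f v < (m - u) * f m"
    using dec[of m v] m by simp
  moreover have "integral {u..m} f + integral {m..v} f = integral {u..v} f"
    using Henstock_Kurzweil_Integration.integral_combine[of u m v f] m assms(2) by simp
  ultimately show ?thesis
    by (simp add: algebra_simps)
qed

lemma tail_average_less:
  fixes f :: "real \<Rightarrow> real"
  assumes "u < v" "v < w" and f: "f integrable_on {u..w}" and dec: "strict_antimono_on {u..w} f"
  shows "(w - u) * integral {v..w} f < (w - v) * integral {u..w} f"
proof -
  have upper: "integral {v..w} f \<le> (w - v) * f v"
    using integral_le[where f=f and S="{v..w}" and g="\<lambda>_. f v"]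
      integrable_subinterval_real[OF f, of v w] assms
    by (force simp: monotone_on_def less_eq_real_def)
  have lower: "(v - u) * f v < integral {u..v} f"
    using integral_gt_if_strict_antimono[of u v f] integrable_subinterval_real[OF f, of u v]
      monotone_on_subset[OF dec, of "{u..v}"] assms by auto
  have combine: "integral {u..v} f + integral {v..w} f = integral {u..w} f"
    using Henstock_Kurzweil_Integration.integral_combine[of u v w f] assms by simp
  have "(v - u) * integral {v..w} f \<le> (v - u) * ((w - v) * f v)"
    using upper assms by (intro mult_left_mono) auto
  also have "\<dots> = (w - v) * ((v - u) * f v)"
    by simp
  also have "\<dots> < (w - v) * integral {u..v} f"
    using lower assms by simp
  finally show ?thesis
    unfolding combine[symmetric] by (simp add: algebra_simps)
qed

section \<open>Density of the first disruption\<close>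

locale intensity =
  fixes lam :: "real \<Rightarrow> real"
  assumes nonneg: "\<And>t. 0 \<le> t \<Longrightarrow> 0 \<le> lam t"
    and integrable: "\<And>t. 0 \<le> t \<Longrightarrow> lam integrable_on {0..t}"
begin

abbreviation Lam :: "real \<Rightarrow> real" where
  "Lam t \<equiv> integral {0..t} lam"

lemma integrable_on_Icc: "0 \<le> u \<Longrightarrow> lam integrable_on {u..v}"
  using integrable[of v] integrable_subinterval_real[of lam 0 v u v]
  by (cases "u \<le> v") auto

lemma integral_Icc_eq_Lam_diff: "0 \<le> r \<Longrightarrow> r \<le> t \<Longrightarrow> integral {r..t} lam = Lam t - Lam r"
  using integral_Icc_diff[of lam 0 t r] integrable[of t] by simp

lemma Lam_mono: "0 \<le> r \<Longrightarrow> r \<le> t \<Longrightarrow> Lam r \<le> Lam t"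
  using integral_Icc_eq_Lam_diff[of r t] integral_nonneg[OF integrable_on_Icc[of r t]] nonneg
  by force

lemma continuous_on_Lam: "0 \<le> u \<Longrightarrow> continuous_on {u..v} Lam"
  using continuous_on_subset[OF indefinite_integral_continuous_1[OF integrable[of v]]]
  by (cases "u \<le> v") auto

lemma pdens_nonneg: "0 \<le> s \<Longrightarrow> 0 \<le> pdens lam s"
  using nonneg by (simp add: pdens_def)

lemma pdens_integrable_on_Icc:
  assumes "0 \<le> u"
  shows "pdens lam integrable_on {u..v}"
proof -
  have "continuous_on {u..v} (\<lambda>s. exp (- Lam s))"
    using continuous_on_Lam[OF assms] by (intro continuous_intros)
  then have "(\<lambda>s. exp (- Lam s) * lam s) integrable_on {u..v}"
    by (rule integrable_continuous_mult_nonneg[OF integrable_on_Icc[OF assms], rotated])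
      (use nonneg assms in auto)
  then show ?thesis
    by (simp add: pdens_def[abs_def] mult.commute)
qed

lemma integral_pdens_le:
  assumes "0 \<le> r" "r \<le> t"
  shows "integral {r..t} (pdens lam) \<le> exp (- Lam r) * (Lam t - Lam r)"
proof -
  have "integral {r..t} (pdens lam) \<le> integral {r..t} (\<lambda>s. exp (- Lam r) * lam s)"
  proof (rule integral_le)
    show "pdens lam integrable_on {r..t}"
      using pdens_integrable_on_Icc assms by auto
    show "(\<lambda>s. exp (- Lam r) * lam s) integrable_on {r..t}"
      using integrable_on_Icc[of r t] assms by (simp add: integrable_on_cmult_left)
    show "pdens lam s \<le> exp (- Lam r) * lam s" if "s \<in> {r..t}" for s
      using Lam_mono[of r s] nonneg[of s] that assms
      by (simp add: pdens_def mult_left_mono mult.commute)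
  qed
  then show ?thesis
    using integral_Icc_eq_Lam_diff[OF assms] by simp
qed

text \<open>The mass of \<open>pdens lam\<close> on \<open>[0, t]\<close> is \<open>1 - exp (- Lam t)\<close>, but proving that needs a
  chain rule for the merely integrable \<open>lam\<close>. A cruder bound suffices: cut \<open>[r, t]\<close> at the
  points where \<open>Lam\<close> has grown by one and sum a geometric series.\<close>
lemma integral_pdens_le_2exp:
  assumes "0 \<le> r" "r \<le> t"
  shows "integral {r..t} (pdens lam) \<le> 2 * exp (- Lam r)"
proof -
  have small: "integral {r..t} (pdens lam) \<le> 2 * exp (- Lam r)"
    if "0 \<le> r" "r \<le> t" "Lam t - Lam r \<le> 1" for r
  proof -
    have "exp (- Lam r) * (Lam t - Lam r) \<le> exp (- Lam r) * 1"
      using that by (intro mult_left_mono) auto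
    then show ?thesis
      using integral_pdens_le[OF that(1,2)] exp_gt_zero[of "- Lam r"] by linarith
  qed
  obtain K :: nat where "Lam t - Lam r \<le> real K"
    using real_arch_simple by blast
  with assms show ?thesis
  proof (induction K arbitrary: r)
    case 0
    then show ?case by (intro small) auto
  next
    case (Suc K)
    show ?case
    proof (cases "Lam t - Lam r \<le> 1")
      case True
      then show ?thesis using small Suc.prems by blast
    next
      case False
      obtain m where m: "r \<le> m" "m \<le> t" "Lam m = Lam r + 1"
        using IVT'[of Lam r "Lam r + 1" t] False Suc.prems continuous_on_Lam[of r t] by auto
      have "integral {r..m} (pdens lam) \<le> exp (- Lam r)"
        using integral_pdens_le[of r m] m Suc.prems by simp
      moreover have "integral {m..t} (pdens lam) \<le> 2 * exp (- Lam m)"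
        using Suc.IH[of m] m Suc.prems by auto
      moreover have "2 * exp (- Lam m) \<le> exp (- Lam r)"
      proof -
        have "2 * exp (- Lam r - 1) \<le> exp 1 * exp (- Lam r - 1)"
          using exp_ge_add_one_self[of 1] by (intro mult_right_mono) auto
        then show ?thesis
          using m by (simp add: exp_add[symmetric])
      qed
      moreover have "integral {r..m} (pdens lam) + integral {m..t} (pdens lam)
          = integral {r..t} (pdens lam)"
        using Henstock_Kurzweil_Integration.integral_combine[of r m t "pdens lam"]
          pdens_integrable_on_Icc[of r t] m Suc.prems by simp
      ultimately show ?thesis
        by linarith
    qed
  qed
qed

lemma pdens_integrable: "pdens lam integrable_on {0..}"
proof (rule integrable_on_atLeast_if_integrals_bounded[where B=2])
  show "integral {0..b} (pdens lam) \<le> 2" if "0 \<le> b" for b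
    using integral_pdens_le_2exp[OF order_refl that] by simp
qed (use pdens_integrable_on_Icc pdens_nonneg in auto)

end

section \<open>Minimisers over permutations\<close>

lemma strict_mono_on_if_Suc:
  fixes a :: "nat \<Rightarrow> 'a::order"
  assumes step: "\<And>i. i \<in> {m..<n} \<Longrightarrow> a i < a (Suc i)"
  shows "strict_mono_on {m..n} a"
proof (rule strict_mono_onI)
  fix j k assume j: "j \<in> {m..n}" and "k \<in> {m..n}" "j < k"
  then have "Suc j \<le> k" "k \<le> n"
    by auto
  then show "a j < a k"
  proof (induction k rule: dec_induct)
    case base
    then show ?case using step j by auto
  next
    case (step k)
    then show ?case using assms[of k] j by (auto intro: order.strict_trans)
  qed
qed

lemma permutes_eq_id_if_ascending:
  assumes perm: "\<rho> permutes {1..n}" and asc: "\<And>i. 1 \<le> i \<Longrightarrow> i < n \<Longrightarrow> \<rho> i < \<rho> (Suc i)"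
  shows "\<rho> = id"
proof (rule permutes_natset_ge[OF perm], intro ballI)
  fix j assume "j \<in> {1..n}"
  then show "j \<le> \<rho> j"
  proof (induction j)
    case (Suc j)
    show ?case
    proof (cases "j = 0")
      case True
      then show ?thesis using permutes_in_image[OF perm, of 1] Suc.prems by auto
    next
      case False
      then show ?thesis using Suc asc[of j] by fastforce
    qed
  qed simp
qed

lemma permutes_adjacent_descent:
  assumes "\<rho> permutes {1..n}" "\<rho> \<noteq> id"
  obtains i where "1 \<le> i" "i < n" "\<rho> (Suc i) < \<rho> i"
proof -
  have "\<rho> i \<noteq> \<rho> (Suc i)" for i
    using permutes_inj[OF assms(1)] by (metis injD n_not_Suc_n)
  then show ?thesis
    using that permutes_eq_id_if_ascending[OF assms(1)] assms(2) by (meson linorder_neqE_nat)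
qed

lemma strict_min_id_if_adjacent_swaps_improve:
  fixes S :: "(nat \<Rightarrow> nat) \<Rightarrow> 'a::linorder"
  assumes improve: "\<And>\<rho> i. \<rho> permutes {1..n} \<Longrightarrow> 1 \<le> i \<Longrightarrow> i < n \<Longrightarrow> \<rho> (Suc i) < \<rho> i
      \<Longrightarrow> S (\<rho> \<circ> Transposition.transpose i (Suc i)) < S \<rho>"
    and \<pi>: "\<pi> permutes {1..n}" "\<pi> \<noteq> id"
  shows "S id < S \<pi>"
proof -
  have better: "\<exists>\<rho>'. \<rho>' permutes {1..n} \<and> S \<rho>' < S \<rho>"
    if \<rho>: "\<rho> permutes {1..n}" "\<rho> \<noteq> id" for \<rho>
  proof -
    obtain i where i: "1 \<le> i" "i < n" "\<rho> (Suc i) < \<rho> i"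
      using permutes_adjacent_descent[OF \<rho>] .
    then have "\<rho> \<circ> Transposition.transpose i (Suc i) permutes {1..n}"
      by (intro permutes_compose[OF _ \<rho>(1)] permutes_swap_id) auto
    then show ?thesis
      using improve[OF \<rho>(1) i] by blast
  qed
  obtain \<mu> where \<mu>: "\<mu> permutes {1..n}" and min: "\<And>\<rho>. \<rho> permutes {1..n} \<Longrightarrow> S \<mu> \<le> S \<rho>"
    using ex_is_arg_min_if_finite[OF finite_permutations[of "{1..n}"], of S] permutes_id
    by (fastforce simp: is_arg_min_def not_less)
  have "\<mu> = id"
    using better[OF \<mu>] min by (meson leD)
  moreover obtain \<pi>' where "\<pi>' permutes {1..n}" "S \<pi>' < S \<pi>"
    using better[OF \<pi>] by blast
  ultimately show ?thesis
    using min[of \<pi>'] by auto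
qed

lemma lpt_lpt [simp]: "lpt n (lpt n x) = x"
  by (auto simp: lpt_def)

lemma lpt_permutes: "lpt n permutes {1..n}"
  by (rule bij_imp_permutes, rule bij_betwI[where g="lpt n"]) (auto simp: lpt_def)

lemma strict_min_lpt_if_adjacent_swaps_improve:
  fixes S :: "(nat \<Rightarrow> nat) \<Rightarrow> 'a::linorder"
  assumes improve: "\<And>\<rho> i. \<rho> permutes {1..n} \<Longrightarrow> 1 \<le> i \<Longrightarrow> i < n \<Longrightarrow> \<rho> i < \<rho> (Suc i)
      \<Longrightarrow> S (\<rho> \<circ> Transposition.transpose i (Suc i)) < S \<rho>"
    and \<pi>: "\<pi> permutes {1..n}" "\<pi> \<noteq> lpt n"
  shows "S (lpt n) < S \<pi>"
proof -
  have lpt_comp: "lpt n \<circ> (lpt n \<circ> \<rho>) = \<rho>" for \<rho> :: "nat \<Rightarrow> nat"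
    by (simp add: fun_eq_iff)
  have "S (lpt n \<circ> id) < S (lpt n \<circ> (lpt n \<circ> \<pi>))"
  proof (rule strict_min_id_if_adjacent_swaps_improve[where S="\<lambda>\<rho>. S (lpt n \<circ> \<rho>)"])
    fix \<rho> i assume \<rho>: "\<rho> permutes {1..n}" and i: "1 \<le> i" "i < n" and "\<rho> (Suc i) < \<rho> i"
    then have "(lpt n \<circ> \<rho>) i < (lpt n \<circ> \<rho>) (Suc i)"
      using permutes_in_image[OF \<rho>, of i] permutes_in_image[OF \<rho>, of "Suc i"]
      by (auto simp: lpt_def)
    from improve[OF permutes_compose[OF \<rho> lpt_permutes] i this]
    show "S (lpt n \<circ> (\<rho> \<circ> Transposition.transpose i (Suc i))) < S (lpt n \<circ> \<rho>)"
      by (simp add: comp_def)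
  next
    show "lpt n \<circ> \<pi> permutes {1..n}"
      by (rule permutes_compose[OF \<pi>(1) lpt_permutes])
    show "lpt n \<circ> \<pi> \<noteq> id"
      using \<pi>(2) lpt_comp[of \<pi>] by auto
  qed
  then show ?thesis
    by (simp add: lpt_comp)
qed

section \<open>Expected completion time\<close>

lemma Apre_0 [simp]: "Apre a \<pi> 0 = 0"
  by (simp add: Apre_def)

lemma Apre_Suc: "Apre a \<pi> (Suc i) = Apre a \<pi> i + a (\<pi> (Suc i))"
  by (simp add: Apre_def)

lemma Apre_mono:
  assumes "i \<le> k" "k \<le> n" "\<forall>j\<in>{1..n}. 0 \<le> a (\<pi> j)"
  shows "Apre a \<pi> i \<le> Apre a \<pi> k"
  unfolding Apre_def using assms by (intro sum_mono2) auto

lemma Apre_permutes: "\<pi> permutes {1..n} \<Longrightarrow> Apre a \<pi> n = Apre a id n"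
  unfolding Apre_def using sum.permute[of \<pi> "{1..n}" a] by (simp add: comp_def)

lemma task_in_progress:
  assumes "0 \<le> s" "s < Apre a \<pi> n" and a: "\<forall>j\<in>{1..n}. 0 \<le> a (\<pi> j)"
  obtains i where "1 \<le> i" "i \<le> n" "\<And>j. j \<le> n \<Longrightarrow> s < Apre a \<pi> j \<longleftrightarrow> i \<le> j"
proof -
  define i where "i = (LEAST i. s < Apre a \<pi> i)"
  have s_less: "s < Apre a \<pi> i"
    unfolding i_def by (rule LeastI[of _ n]) (rule assms(2))
  have before: "\<not> s < Apre a \<pi> j" if "j < i" for j
    using not_less_Least[OF that[unfolded i_def]] .
  have "i \<le> n"
    unfolding i_def by (rule Least_le) (rule assms(2))
  moreover have "i \<noteq> 0"
    using s_less assms(1) by (intro notI) simp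
  moreover have "s < Apre a \<pi> j \<longleftrightarrow> i \<le> j" if j: "j \<le> n" for j
  proof
    show "i \<le> j" if "s < Apre a \<pi> j"
      using before[of j] that not_less by blast
    show "s < Apre a \<pi> j" if "i \<le> j"
      using s_less Apre_mono[of i j n a \<pi>] j that a by linarith
  qed
  ultimately show ?thesis
    by (intro that[of i]) auto
qed

lemma Tcompl_eq:
  assumes a: "\<forall>j\<in>{1..n}. 0 \<le> a (\<pi> j)" and "0 \<le> s"
  shows "Tcompl a \<pi> n s = min s (Apre a \<pi> n) + (\<Sum>j=1..n. if s < Apre a \<pi> j then a (\<pi> j) else 0)"
proof (cases "s < Apre a \<pi> n")
  case False
  then have not_after: "\<not> s < Apre a \<pi> j" if "j \<le> n" for j
    using Apre_mono[of j n n a \<pi>] that a by linarith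
  have "Tcompl a \<pi> n s = Apre a \<pi> n"
    unfolding Tcompl_def
    by (subst sum.neutral[where A="{1..n}"])
      (use False[unfolded not_less] in \<open>auto simp: not_after\<close>)
  moreover have "(\<Sum>j=1..n. if s < Apre a \<pi> j then a (\<pi> j) else 0) = 0"
    by (rule sum.neutral) (auto simp: not_after)
  ultimately show ?thesis
    using False by simp
next
  case True
  obtain i where i: "1 \<le> i" "i \<le> n" and after: "\<And>j. j \<le> n \<Longrightarrow> s < Apre a \<pi> j \<longleftrightarrow> i \<le> j"
    using task_in_progress[OF \<open>0 \<le> s\<close> True a] by blast
  have window: "Apre a \<pi> (j - 1) \<le> s \<and> s < Apre a \<pi> j \<longleftrightarrow> j = i" if j: "j \<in> {1..n}" for j
  proof -
    have "j - 1 \<le> n" "j \<le> n"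
      using j by auto
    then have "Apre a \<pi> (j - 1) \<le> s \<longleftrightarrow> j - 1 < i" "s < Apre a \<pi> j \<longleftrightarrow> i \<le> j"
      using after by (auto simp flip: not_less)
    then show ?thesis
      using i j by auto
  qed
  have "Tcompl a \<pi> n s
      = (\<Sum>j=1..n. if Apre a \<pi> (j - 1) \<le> s \<and> s < Apre a \<pi> j then s + (\<Sum>k=j..n. a (\<pi> k)) else 0)"
    unfolding Tcompl_def using True by simp
  also have "\<dots> = (\<Sum>j=1..n. if j = i then s + (\<Sum>k=i..n. a (\<pi> k)) else 0)"
    by (rule sum.cong) (simp_all only: window, simp)
  also have "\<dots> = s + (\<Sum>k=i..n. a (\<pi> k))"
    using i by simp
  also have "(\<Sum>k=i..n. a (\<pi> k)) = (\<Sum>j=1..n. if s < Apre a \<pi> j then a (\<pi> j) else 0)"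
  proof -
    have "{j \<in> {1..n}. i \<le> j} = {i..n}"
      using i by auto
    then show ?thesis
      using after by (simp add: sum.inter_filter[symmetric])
  qed
  finally show ?thesis
    using True by simp
qed

text \<open>With \<open>F\<close> the distribution function of the disruption time, this is the only part of
  the expected completion time that depends on the order \<open>\<pi>\<close> (lemma \<open>Rexp_eq\<close>).\<close>
definition prefix_cost :: "(nat \<Rightarrow> real) \<Rightarrow> (nat \<Rightarrow> nat) \<Rightarrow> nat \<Rightarrow> (real \<Rightarrow> real) \<Rightarrow> real" where
  "prefix_cost a \<pi> n F = (\<Sum>i=1..n. a (\<pi> i) * F (Apre a \<pi> i))"

lemma Apre_transpose:
  assumes "1 \<le> i" "j \<noteq> i"
  shows "Apre a (\<pi> \<circ> Transposition.transpose i (Suc i)) j = Apre a \<pi> j"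
proof (cases "j < i")
  case True
  then show ?thesis
    unfolding Apre_def by (intro sum.cong) auto
next
  case False
  with assms have "Transposition.transpose i (Suc i) permutes {1..j}"
    by (intro permutes_swap_id) auto
  then show ?thesis
    unfolding Apre_def using sum.permute[of _ "{1..j}" "\<lambda>k. a (\<pi> k)"] by (simp add: comp_def)
qed

lemma Apre_transpose_self:
  assumes "1 \<le> i"
  shows "Apre a (\<pi> \<circ> Transposition.transpose i (Suc i)) i = Apre a \<pi> (i - 1) + a (\<pi> (Suc i))"
  using Apre_Suc[of a "\<pi> \<circ> Transposition.transpose i (Suc i)" "i - 1"]
    Apre_transpose[OF assms, of "i - 1"] assms
  by simp

lemma prefix_cost_transpose:
  fixes a :: "nat \<Rightarrow> real" and F :: "real \<Rightarrow> real" and \<pi> :: "nat \<Rightarrow> nat"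
  assumes i: "1 \<le> i" "i < n"
  defines "t \<equiv> Apre a \<pi> (i - 1)" and "x \<equiv> a (\<pi> i)" and "y \<equiv> a (\<pi> (Suc i))"
  shows "prefix_cost a (\<pi> \<circ> Transposition.transpose i (Suc i)) n F - prefix_cost a \<pi> n F
    = x * (F (t + x + y) - F (t + x)) - y * (F (t + x + y) - F (t + y))"
proof -
  let ?\<rho> = "\<pi> \<circ> Transposition.transpose i (Suc i)"
  define d where "d j = a (?\<rho> j) * F (Apre a ?\<rho> j) - a (\<pi> j) * F (Apre a \<pi> j)" for j
  have Apre_i: "Apre a \<pi> i = t + x" and Apre_Suc_i: "Apre a \<pi> (Suc i) = t + x + y"
    using Apre_Suc[of a \<pi> "i - 1"] Apre_Suc[of a \<pi> i] i by (simp_all add: t_def x_def y_def)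
  have "prefix_cost a ?\<rho> n F - prefix_cost a \<pi> n F = (\<Sum>j=1..n. d j)"
    by (simp add: prefix_cost_def d_def sum_subtractf)
  also have "\<dots> = (\<Sum>j\<in>{i, Suc i}. d j)"
    using i by (intro sum.mono_neutral_right) (auto simp: d_def Apre_transpose)
  also have "\<dots> = d i + d (Suc i)"
    by simp
  also have "\<dots> = x * (F (t + x + y) - F (t + x)) - y * (F (t + x + y) - F (t + y))"
    using Apre_transpose_self[OF i(1)] Apre_transpose[OF i(1), of "Suc i"] Apre_i Apre_Suc_i
    by (simp add: d_def x_def y_def t_def algebra_simps)
  finally show ?thesis .
qed

lemma prefix_cost_transpose_less:
  fixes p :: "real \<Rightarrow> real"
  assumes a: "\<forall>j\<in>{1..n}. 0 < a j" and \<pi>: "\<pi> permutes {1..n}" and i: "1 \<le> i" "i < n"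
    and descent: "a (\<pi> (Suc i)) < a (\<pi> i)"
    and p: "p integrable_on {0..Apre a \<pi> n}" "strict_antimono_on {0..Apre a \<pi> n} p"
  shows "prefix_cost a (\<pi> \<circ> Transposition.transpose i (Suc i)) n (\<lambda>x. integral {0..x} p)
    < prefix_cost a \<pi> n (\<lambda>x. integral {0..x} p)"
proof -
  define t x y where "t = Apre a \<pi> (i - 1)" and "x = a (\<pi> i)" and "y = a (\<pi> (Suc i))"
  have a\<pi>: "\<forall>j\<in>{1..n}. 0 < a (\<pi> j)"
    using a permutes_in_image[OF \<pi>] by auto
  then have "0 \<le> t" "0 < y" "y < x"
    using Apre_mono[of 0 "i - 1" n a \<pi>] i descent by (auto simp: t_def x_def y_def less_imp_le)
  moreover have "t + x + y \<le> Apre a \<pi> n"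
    using Apre_mono[of "Suc i" n n a \<pi>] Apre_Suc[of a \<pi> i] Apre_Suc[of a \<pi> "i - 1"] a\<pi> i
    by (simp add: t_def x_def y_def less_imp_le)
  ultimately have "x * integral {t + x..t + x + y} p < y * integral {t + y..t + x + y} p"
    using tail_average_less[of "t + y" "t + x" "t + x + y" p]
      integrable_subinterval_real[OF p(1)] monotone_on_subset[OF p(2)] by auto
  moreover have "integral {0..w} p - integral {0..v} p = integral {v..w} p"
    if "0 \<le> v" "v \<le> w" "w \<le> Apre a \<pi> n" for v w
    using integral_Icc_diff[of p 0 w v] integrable_subinterval_real[OF p(1), of 0 w] that by simp
  ultimately show ?thesis
    using prefix_cost_transpose[OF i, of a \<pi> "\<lambda>x. integral {0..x} p"] \<open>0 \<le> t\<close> \<open>0 < y\<close> \<open>y < x\<close>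
      \<open>t + x + y \<le> Apre a \<pi> n\<close>
    by (simp add: t_def x_def y_def)
qed

lemma prefix_cost_transpose_less_if_strict_mono:
  fixes p :: "real \<Rightarrow> real"
  assumes a: "\<forall>j\<in>{1..n}. 0 < a j" and \<pi>: "\<pi> permutes {1..n}" and i: "1 \<le> i" "i < n"
    and ascent: "a (\<pi> i) < a (\<pi> (Suc i))"
    and p: "p integrable_on {0..Apre a \<pi> n}" "strict_mono_on {0..Apre a \<pi> n} p"
  shows "prefix_cost a (\<pi> \<circ> Transposition.transpose i (Suc i)) n (\<lambda>x. integral {0..x} p)
    < prefix_cost a \<pi> n (\<lambda>x. integral {0..x} p)"
proof -
  define \<rho> where "\<rho> = \<pi> \<circ> Transposition.transpose i (Suc i)"
  have \<rho>: "\<rho> permutes {1..n}"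
    unfolding \<rho>_def using i by (intro permutes_compose[OF _ \<pi>] permutes_swap_id) auto
  have "\<rho> \<circ> Transposition.transpose i (Suc i) = \<pi>"
    by (simp add: \<rho>_def comp_assoc)
  moreover have "Apre a \<rho> n = Apre a \<pi> n"
    using Apre_permutes[OF \<rho>] Apre_permutes[OF \<pi>] by simp
  moreover have "a (\<rho> (Suc i)) < a (\<rho> i)"
    using ascent by (simp add: \<rho>_def)
  moreover have "strict_antimono_on {0..Apre a \<pi> n} (\<lambda>s. - p s)"
    using p(2) by (auto simp: monotone_on_def)
  ultimately have "prefix_cost a \<pi> n (\<lambda>x. integral {0..x} (\<lambda>s. - p s))
      < prefix_cost a \<rho> n (\<lambda>x. integral {0..x} (\<lambda>s. - p s))"
    using prefix_cost_transpose_less[OF a \<rho> i, of "\<lambda>s. - p s"] integrable_neg[OF p(1)] by simp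
  then show ?thesis
    by (simp add: prefix_cost_def sum_negf \<rho>_def)
qed

context
  fixes p :: "real \<Rightarrow> real"
  assumes p_nonneg: "\<And>s. 0 \<le> s \<Longrightarrow> 0 \<le> p s" and p_integrable: "p integrable_on {0..}"
begin

lemma p_integrable_on_Icc: "p integrable_on {0..x}"
  by (rule integrable_on_subinterval[OF p_integrable]) auto

lemma has_integral_Tcompl_mult:
  assumes a: "\<forall>j\<in>{1..n}. 0 \<le> a (\<pi> j)"
  defines "A \<equiv> Apre a \<pi> n"
  shows "((\<lambda>s. Tcompl a \<pi> n s * p s) has_integral
      integral {0..A} (\<lambda>s. s * p s) + A * (integral {0..} p - integral {0..A} p)
      + prefix_cost a \<pi> n (\<lambda>x. integral {0..x} p)) {0..}"
proof -
  have Apre_nonneg: "0 \<le> Apre a \<pi> j" if "j \<le> n" for j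
    using Apre_mono[of 0 j n a \<pi>] a that by simp
  then have "0 \<le> A"
    by (simp add: A_def)
  have before_end:
    "((\<lambda>s. if s < A then s * p s else 0) has_integral integral {0..A} (\<lambda>s. s * p s)) {0..}"
    by (intro has_integral_restrict_less \<open>0 \<le> A\<close> integrable_continuous_mult_nonneg
        p_integrable_on_Icc)
      (auto intro: p_nonneg continuous_on_id)
  have after_end: "((\<lambda>s. A * p s - (if s < A then A * p s else 0))
      has_integral A * integral {0..} p - A * integral {0..A} p) {0..}"
    using has_integral_diff[OF has_integral_mult_right[OF integrable_integral[OF p_integrable]]
        has_integral_restrict_less[OF \<open>0 \<le> A\<close>, of "\<lambda>s. A * p s"]]
      integrable_on_cmult_left[OF p_integrable_on_Icc[of A], of A] by simp
  have tasks: "((\<lambda>s. \<Sum>j=1..n. if s < Apre a \<pi> j then a (\<pi> j) * p s else 0)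
      has_integral prefix_cost a \<pi> n (\<lambda>x. integral {0..x} p)) {0..}"
    unfolding prefix_cost_def
    using has_integral_restrict_less[OF Apre_nonneg, of _ "\<lambda>s. a (\<pi> _) * p s"]
      integrable_on_cmult_left[OF p_integrable_on_Icc] by (intro has_integral_sum) auto
  have distr: "(\<Sum>j=1..n. if s < Apre a \<pi> j then a (\<pi> j) else 0) * p s
      = (\<Sum>j=1..n. if s < Apre a \<pi> j then a (\<pi> j) * p s else 0)" for s
    by (auto simp: sum_distrib_right intro!: sum.cong)
  have "Tcompl a \<pi> n s * p s
      = min s A * p s + (\<Sum>j=1..n. if s < Apre a \<pi> j then a (\<pi> j) * p s else 0)" if "0 \<le> s" for s
    unfolding Tcompl_eq[where a=a and \<pi>=\<pi> and n=n, OF a that] distrib_right distr A_def ..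
  moreover have "min s A * p s
      = (if s < A then s * p s else 0) + (A * p s - (if s < A then A * p s else 0))" for s
    by (simp add: min_def)
  ultimately have pointwise: "Tcompl a \<pi> n s * p s = (if s < A then s * p s else 0)
      + (A * p s - (if s < A then A * p s else 0))
      + (\<Sum>j=1..n. if s < Apre a \<pi> j then a (\<pi> j) * p s else 0)" if "s \<in> {0..}" for s
    using that by simp
  have "((\<lambda>s. Tcompl a \<pi> n s * p s) has_integral integral {0..A} (\<lambda>s. s * p s)
      + (A * integral {0..} p - A * integral {0..A} p)
      + prefix_cost a \<pi> n (\<lambda>x. integral {0..x} p)) {0..}"
    by (rule has_integral_cong[THEN iffD2,
          OF pointwise has_integral_add[OF has_integral_add[OF before_end after_end] tasks]])
  then show ?thesis
    by (simp add: algebra_simps)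
qed

lemma Rexp_eq:
  assumes "\<forall>j\<in>{1..n}. 0 \<le> a (\<pi> j)"
  shows "Rexp a \<pi> n p = integral {0..Apre a \<pi> n} (\<lambda>s. s * p s)
      + Apre a \<pi> n * (1 - integral {0..Apre a \<pi> n} p) + prefix_cost a \<pi> n (\<lambda>x. integral {0..x} p)"
  using integral_unique[OF has_integral_Tcompl_mult[where a=a and \<pi>=\<pi> and n=n, OF assms]]
  by (simp add: Rexp_def algebra_simps)

lemma Rexp_diff:
  assumes a: "\<forall>i\<in>{1..n}. 0 \<le> a i" and \<sigma>: "\<sigma> permutes {1..n}" and \<pi>: "\<pi> permutes {1..n}"
  shows "Rexp a \<sigma> n p - Rexp a \<pi> n p
    = prefix_cost a \<sigma> n (\<lambda>x. integral {0..x} p) - prefix_cost a \<pi> n (\<lambda>x. integral {0..x} p)"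
proof -
  have "\<forall>j\<in>{1..n}. 0 \<le> a (\<rho> j)" if "\<rho> permutes {1..n}" for \<rho>
    using a permutes_in_image[OF that] by auto
  then show ?thesis
    using Rexp_eq Apre_permutes[OF \<sigma>] Apre_permutes[OF \<pi>] \<sigma> \<pi> by simp
qed

lemma Rexp_id_less:
  assumes a_pos: "\<forall>i\<in>{1..n}. 0 < a i" and a_incr: "\<forall>i\<in>{1..<n}. a i < a (Suc i)"
    and dec: "strict_antimono_on {0..Apre a id n} p" and \<pi>: "\<pi> permutes {1..n}" "\<pi> \<noteq> id"
  shows "Rexp a id n p < Rexp a \<pi> n p"
proof -
  have a_mono: "strict_mono_on {1..n} a"
    using a_incr by (intro strict_mono_on_if_Suc) auto
  have "prefix_cost a id n (\<lambda>x. integral {0..x} p) < prefix_cost a \<pi> n (\<lambda>x. integral {0..x} p)"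
  proof (rule strict_min_id_if_adjacent_swaps_improve[OF _ \<pi>])
    fix \<rho> i assume \<rho>: "\<rho> permutes {1..n}" and i: "1 \<le> i" "i < n" and "\<rho> (Suc i) < \<rho> i"
    then have "a (\<rho> (Suc i)) < a (\<rho> i)"
      using permutes_in_image[OF \<rho>, of i] permutes_in_image[OF \<rho>, of "Suc i"]
      by (intro strict_mono_onD[OF a_mono]) auto
    then show "prefix_cost a (\<rho> \<circ> Transposition.transpose i (Suc i)) n (\<lambda>x. integral {0..x} p)
        < prefix_cost a \<rho> n (\<lambda>x. integral {0..x} p)"
      using prefix_cost_transpose_less[OF a_pos \<rho> i] p_integrable_on_Icc dec Apre_permutes[OF \<rho>]
      by simp
  qed
  then show ?thesis
    using Rexp_diff[of n a id \<pi>] a_pos \<pi>(1) permutes_id by fastforce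
qed

lemma Rexp_lpt_less:
  assumes a_pos: "\<forall>i\<in>{1..n}. 0 < a i" and a_incr: "\<forall>i\<in>{1..<n}. a i < a (Suc i)"
    and inc: "strict_mono_on {0..Apre a id n} p" and \<pi>: "\<pi> permutes {1..n}" "\<pi> \<noteq> lpt n"
  shows "Rexp a (lpt n) n p < Rexp a \<pi> n p"
proof -
  have a_mono: "strict_mono_on {1..n} a"
    using a_incr by (intro strict_mono_on_if_Suc) auto
  have "prefix_cost a (lpt n) n (\<lambda>x. integral {0..x} p) < prefix_cost a \<pi> n (\<lambda>x. integral {0..x} p)"
  proof (rule strict_min_lpt_if_adjacent_swaps_improve[OF _ \<pi>])
    fix \<rho> i assume \<rho>: "\<rho> permutes {1..n}" and i: "1 \<le> i" "i < n" and "\<rho> i < \<rho> (Suc i)"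
    then have "a (\<rho> i) < a (\<rho> (Suc i))"
      using permutes_in_image[OF \<rho>, of i] permutes_in_image[OF \<rho>, of "Suc i"]
      by (intro strict_mono_onD[OF a_mono]) auto
    then show "prefix_cost a (\<rho> \<circ> Transposition.transpose i (Suc i)) n (\<lambda>x. integral {0..x} p)
        < prefix_cost a \<rho> n (\<lambda>x. integral {0..x} p)"
      using prefix_cost_transpose_less_if_strict_mono[OF a_pos \<rho> i] p_integrable_on_Icc inc
        Apre_permutes[OF \<rho>]
      by simp
  qed
  then show ?thesis
    using Rexp_diff[of n a "lpt n" \<pi>] a_pos \<pi>(1) lpt_permutes by fastforce
qed

end

theorem theorem4:
  fixes a :: "nat \<Rightarrow> real" and n :: nat and lam :: "real \<Rightarrow> real"
  assumes apos: "\<forall>i\<in>{1..n}. 0 < a i"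
    and aincr: "\<forall>i\<in>{1..<n}. a i < a (Suc i)"
    and lam_nonneg: "\<forall>t\<ge>0. 0 \<le> lam t"
    and lam_int: "\<forall>t\<ge>0. lam integrable_on {0..t}"
  shows "(\<forall>\<pi>. \<pi> permutes {1..n} \<longrightarrow>
            Rexp a id n (pdens lam) - Rexp a \<pi> n (pdens lam) =
            (\<Sum>i=1..n. a i * integral {0..Apre a id i} (pdens lam)
                      - a (\<pi> i) * integral {0..Apre a \<pi> i} (pdens lam)))
       \<and> ((\<forall>x\<in>{0..Apre a id n}. \<forall>y\<in>{0..Apre a id n}. x < y \<longrightarrow> pdens lam y < pdens lam x)
          \<longrightarrow> (\<forall>\<pi>. \<pi> permutes {1..n} \<and> \<pi> \<noteq> id \<longrightarrow>
                  Rexp a id n (pdens lam) < Rexp a \<pi> n (pdens lam)))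
       \<and> ((\<forall>x\<in>{0..Apre a id n}. \<forall>y\<in>{0..Apre a id n}. x < y \<longrightarrow> pdens lam x < pdens lam y)
          \<longrightarrow> (\<forall>\<pi>. \<pi> permutes {1..n} \<and> \<pi> \<noteq> lpt n \<longrightarrow>
                  Rexp a (lpt n) n (pdens lam) < Rexp a \<pi> n (pdens lam)))"
proof -
  interpret intensity lam
    using lam_nonneg lam_int by unfold_locales auto
  note density = pdens_nonneg pdens_integrable
  have a_nonneg: "\<forall>i\<in>{1..n}. 0 \<le> a i"
    using apos by auto
  have "Rexp a id n (pdens lam) - Rexp a \<pi> n (pdens lam) =
      (\<Sum>i=1..n. a i * integral {0..Apre a id i} (pdens lam)
                - a (\<pi> i) * integral {0..Apre a \<pi> i} (pdens lam))"
    if "\<pi> permutes {1..n}" for \<pi>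
    using Rexp_diff[OF density a_nonneg permutes_id that]
    by (simp add: prefix_cost_def sum_subtractf)
  moreover have "Rexp a id n (pdens lam) < Rexp a \<pi> n (pdens lam)"
    if "strict_antimono_on {0..Apre a id n} (pdens lam)" "\<pi> permutes {1..n}" "\<pi> \<noteq> id" for \<pi>
    by (rule Rexp_id_less[OF density apos aincr that])
  moreover have "Rexp a (lpt n) n (pdens lam) < Rexp a \<pi> n (pdens lam)"
    if "strict_mono_on {0..Apre a id n} (pdens lam)" "\<pi> permutes {1..n}" "\<pi> \<noteq> lpt n" for \<pi>
    by (rule Rexp_lpt_less[OF density apos aincr that])
  ultimately show ?thesis
    by (auto simp: monotone_on_def)
qed

end
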